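(* Let $\mathcal{M}$ be a CTMC with state space $S$, nonnegative reward function $\rho\colon S\to\mathbb{R}_{\geq0}$, and a unique absorbing goal state $g$ with $\rho(g)>0$. Let $s\in S$ with $\rho(s)=0$ and $P(s,s)\in(0,1)$. Let $\mathcal{M}^*$ be as $\mathcal{M}$ except that $P^{\mathcal{M}^*}(s,s)=0$ and $P^{\mathcal{M}^*}(s,s')=\frac{P^{\mathcal{M}}(s,s')}{1-P^{\mathcal{M}}(s,s)}$ for all $s'\neq s$. Then $\mathrm{Pr}^{\mathcal{M}}_s(\lozenge_{\leq r}g)=\mathrm{Pr}^{\mathcal{M}^*}_s(\lozenge_{\leq r}g)$ for all $r\geq0$.
   Context: A CTMC has finite state set $S$, transition probabilities $P\colon S\to\mathrm{Distr}(S)$, exit rates $E\colon S\to\mathbb{R}_{>0}$, an initial state and a labeling. A timed path is $\sigma=s_0t_0s_1t_1\dots$ with $t_i>0$ the residence time in $s_i$ (exponential with rate $E(s_i)$; then a jump to $s_{i+1}$ with probability $P(s_i,s_{i+1})$). $\sigma@t=s_m$ for $m$ the smallest index with $t\leq\sum_{i=0}^mt_i$. Cumulative reward until $t$: $\rho(\sigma,t)=\sum_{j=0}^{m-1}t_j\rho(s_j)+(t-\sum_{j=0}^{m-1}t_j)\rho(s_m)$ where $\sigma@t=s_m$. $\mathrm{Pr}^{\mathcal{M}}_s(\lozenge_{\leq r}g)$ is the probability that $\mathcal{M}$ started in $s$ reaches $g$ while having accumulated reward at most $r$. *)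

theory Defs
  imports "HOL-Probability.Probability"
begin

text \<open>A CTMC over a finite state type 's is given by transition probabilities
  P :: 's => 's pmf and exit rates E :: 's => real (assumed positive).
  A timed path is a stream of pairs (s_i, t_i): state s_i and residence time t_i.\<close>

definition ctmc_step :: "('s \<Rightarrow> 's pmf) \<Rightarrow> ('s \<Rightarrow> real) \<Rightarrow> 's \<Rightarrow> ('s \<times> real) measure" where
  "ctmc_step P E x = measure_pmf (P x) \<Otimes>\<^sub>M density lborel (exponential_density (E x))"

text \<open>Underlying probability space: i.i.d. sequence of independent samples, one per
  possible current state (random mapping representation).\<close>
definition ctmc_noise :: "('s \<Rightarrow> 's pmf) \<Rightarrow> ('s \<Rightarrow> real) \<Rightarrow> ('s \<Rightarrow> 's \<times> real) stream measure" where
  "ctmc_noise P E = stream_space (PiM UNIV (ctmc_step P E))"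

primcorec path_from :: "'s \<Rightarrow> ('s \<Rightarrow> 's \<times> real) stream \<Rightarrow> ('s \<times> real) stream" where
  "path_from x \<omega> = (x, snd (shd \<omega> x)) ## path_from (fst (shd \<omega> x)) (stl \<omega>)"

definition ctmc_paths :: "('s \<Rightarrow> 's pmf) \<Rightarrow> ('s \<Rightarrow> real) \<Rightarrow> 's \<Rightarrow> ('s \<times> real) stream measure" where
  "ctmc_paths P E s =
     distr (ctmc_noise P E) (stream_space (count_space UNIV \<Otimes>\<^sub>M borel)) (path_from s)"

definition st :: "('s \<times> real) stream \<Rightarrow> nat \<Rightarrow> 's" where
  "st \<sigma> i = fst (\<sigma> !! i)"

definition tm :: "('s \<times> real) stream \<Rightarrow> nat \<Rightarrow> real" where
  "tm \<sigma> i = snd (\<sigma> !! i)"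

definition idx_at :: "('s \<times> real) stream \<Rightarrow> real \<Rightarrow> nat" where
  "idx_at \<sigma> t = (LEAST m. t \<le> (\<Sum>i\<le>m. tm \<sigma> i))"

definition state_at :: "('s \<times> real) stream \<Rightarrow> real \<Rightarrow> 's" where
  "state_at \<sigma> t = st \<sigma> (idx_at \<sigma> t)"

definition cum_reward :: "('s \<Rightarrow> real) \<Rightarrow> ('s \<times> real) stream \<Rightarrow> real \<Rightarrow> real" where
  "cum_reward \<rho> \<sigma> t =
     (let m = idx_at \<sigma> t in
       (\<Sum>j<m. tm \<sigma> j * \<rho> (st \<sigma> j)) + (t - (\<Sum>j<m. tm \<sigma> j)) * \<rho> (st \<sigma> m))"

definition reach_bounded :: "('s \<Rightarrow> real) \<Rightarrow> 's \<Rightarrow> real \<Rightarrow> ('s \<times> real) stream set" where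
  "reach_bounded \<rho> g r = {\<sigma>. \<exists>t\<ge>0. state_at \<sigma> t = g \<and> cum_reward \<rho> \<sigma> t \<le> r}"

definition reach_prob :: "('s \<Rightarrow> 's pmf) \<Rightarrow> ('s \<Rightarrow> real) \<Rightarrow> ('s \<Rightarrow> real) \<Rightarrow> 's \<Rightarrow> 's \<Rightarrow> real \<Rightarrow> real" where
  "reach_prob P E \<rho> s g r = measure (ctmc_paths P E s) (reach_bounded \<rho> g r)"

definition absorbing :: "('s \<Rightarrow> 's pmf) \<Rightarrow> 's \<Rightarrow> bool" where
  "absorbing P x \<longleftrightarrow> pmf (P x) x = 1"

end

theory Submission
  imports Defs
begin

(* Up to a null set of paths, reaching g with accumulated reward at most r means entering g at
   some jump with accumulated reward strictly below r, since reward accrues at the positive rate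
   rho g once g is entered. The probability of this event, as a function of the start state and
   the remaining budget, is the least fixed point of a one-step Bellman operator. In the
   zero-reward state s the budget does not change during the residence, so there the operator
   just averages over the successor distribution, and for finite values the equations
   h s = (SUM y. P(s,y) h y) and h s = (SUM y. P*(s,y) h y) are equivalent. As M and M* agree
   elsewhere, the least fixed point for each chain is a fixed point for the other, so the two
   coincide. *)

section \<open>The path measure and the Markov property\<close>

abbreviation path_space :: "('s \<times> real) stream measure" where
  "path_space \<equiv> stream_space (count_space UNIV \<Otimes>\<^sub>M borel)"

lemma sets_ctmc_step: "sets (ctmc_step P E x) = sets (count_space UNIV \<Otimes>\<^sub>M borel)"
  unfolding ctmc_step_def
  by (intro sets_pair_measure_cong) (auto simp: sets_measure_pmf_count_space)

lemma prob_space_ctmc_step: "E x > 0 \<Longrightarrow> prob_space (ctmc_step P E x)"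
  unfolding ctmc_step_def
  by (intro prob_space_pair prob_space_measure_pmf prob_space_exponential_density)

lemma prob_space_ctmc_noise: "(\<And>x. E x > 0) \<Longrightarrow> prob_space (ctmc_noise P E)"
  unfolding ctmc_noise_def
  by (intro prob_space.prob_space_stream_space prob_space_PiM prob_space_ctmc_step) auto

lemma space_ctmc_noise: "space (ctmc_noise P E) = UNIV"
  by (auto simp: ctmc_noise_def space_stream_space space_PiM ctmc_step_def space_pair_measure
      streams_UNIV)

lemma space_path_space: "space path_space = UNIV"
  by (auto simp: space_stream_space space_pair_measure streams_UNIV)

lemma sets_ctmc_paths: "sets (ctmc_paths P E x) = sets path_space"
  by (simp add: ctmc_paths_def)

lemma space_ctmc_paths: "space (ctmc_paths P E x) = UNIV"
  by (simp add: ctmc_paths_def space_path_space)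

fun path_state :: "'s \<Rightarrow> ('s \<Rightarrow> 's \<times> real) stream \<Rightarrow> nat \<Rightarrow> 's" where
  "path_state x \<omega> 0 = x"
| "path_state x \<omega> (Suc n) = fst ((\<omega> !! n) (path_state x \<omega> n))"

lemma path_state_Suc_shift: "path_state x \<omega> (Suc n) = path_state (fst (shd \<omega> x)) (stl \<omega>) n"
  by (induction n) auto

lemma snth_path_from:
  "path_from x \<omega> !! n = (path_state x \<omega> n, snd ((\<omega> !! n) (path_state x \<omega> n)))"
proof (induction n arbitrary: x \<omega>)
  case 0
  then show ?case by simp
next
  case (Suc n)
  then show ?case by (simp add: path_state_Suc_shift del: path_state.simps(2))
qed

lemma measurable_noise_snth:
  "(\<lambda>\<omega>. (\<omega> !! n) y) \<in> measurable (ctmc_noise P E) (count_space UNIV \<Otimes>\<^sub>M borel)"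
proof -
  have "(\<lambda>\<omega>. (\<omega> !! n) y) \<in> measurable (ctmc_noise P E) (ctmc_step P E y)"
    unfolding ctmc_noise_def by measurable
  then show ?thesis by (simp add: measurable_cong_sets[OF refl sets_ctmc_step])
qed

lemma measurable_path_state:
  "(\<lambda>\<omega>. path_state x \<omega> n) \<in> measurable (ctmc_noise P E) (count_space (UNIV :: 's::countable set))"
proof (induction n)
  case 0
  then show ?case by simp
next
  case (Suc n)
  have "(\<lambda>\<omega>. fst ((\<omega> !! n) (path_state x \<omega> n))) \<in> measurable (ctmc_noise P E) (count_space UNIV)"
    by (rule measurable_compose_countable[where f="\<lambda>y \<omega>. fst ((\<omega> !! n) y)", OF _ Suc])
      (rule measurable_compose[OF measurable_noise_snth measurable_fst])
  then show ?case by simp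
qed

lemma measurable_path_from:
  "path_from (x :: 's::countable) \<in> measurable (ctmc_noise P E) path_space"
proof (rule measurable_stream_space2)
  fix n
  have "(\<lambda>\<omega>. snd ((\<omega> !! n) (path_state x \<omega> n))) \<in> borel_measurable (ctmc_noise P E)"
    by (rule measurable_compose_countable[where f="\<lambda>y \<omega>. snd ((\<omega> !! n) y)",
          OF _ measurable_path_state])
      (rule measurable_compose[OF measurable_noise_snth measurable_snd])
  then show "(\<lambda>\<omega>. path_from x \<omega> !! n) \<in> measurable (ctmc_noise P E) (count_space UNIV \<Otimes>\<^sub>M borel)"
    unfolding snth_path_from by (intro measurable_Pair measurable_path_state)
qed

lemma prob_space_ctmc_paths: "(\<And>x. E x > 0) \<Longrightarrow> prob_space (ctmc_paths P E (x :: 's::countable))"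
  unfolding ctmc_paths_def
  by (intro prob_space.prob_space_distr prob_space_ctmc_noise measurable_path_from)

lemma measurable_Cons_path_space:
  "(\<lambda>\<sigma>. (x, t) ## \<sigma>) \<in> measurable path_space path_space"
  by (intro measurable_Stream measurable_const measurable_ident_sets)
    (auto simp: space_pair_measure)

lemma Cons_preimage_sets:
  assumes A: "A \<in> sets path_space"
  shows "{\<sigma>. (x, t) ## \<sigma> \<in> A} \<in> sets path_space"
  using measurable_sets[OF measurable_Cons_path_space A] by (simp add: space_path_space vimage_def)

lemma measurable_emeasure_ctmc_paths_Cons:
  fixes x :: "'s::countable"
  assumes E: "\<And>x. E x > 0" and A: "A \<in> sets path_space"
  shows "(\<lambda>z. emeasure (ctmc_paths P E (fst z)) {\<sigma>. (x, snd z) ## \<sigma> \<in> A})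
    \<in> borel_measurable (ctmc_step P E y)"
proof -
  have "(\<lambda>t. emeasure (ctmc_paths P E x') {\<sigma>. (x, t) ## \<sigma> \<in> A}) \<in> borel_measurable borel"
    for x'
  proof -
    interpret Q: prob_space "ctmc_paths P E x'" by (rule prob_space_ctmc_paths[OF E])
    have "(\<lambda>p. (x, fst p) ## snd p) \<in> measurable (borel \<Otimes>\<^sub>M ctmc_paths P E x') path_space"
      by (intro measurable_Stream measurable_Pair measurable_const measurable_fst'' measurable_snd'')
        (auto simp: space_pair_measure intro: measurable_ident_sets[OF sets_ctmc_paths])
    from measurable_sets[OF this A]
    have "{(t, \<sigma>). (x, t) ## \<sigma> \<in> A} \<in> sets (borel \<Otimes>\<^sub>M ctmc_paths P E x')"
      by (simp add: space_pair_measure space_ctmc_paths vimage_def case_prod_unfold)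
    from Q.measurable_emeasure_Pair[OF this] show ?thesis by (simp add: vimage_def)
  qed
  from measurable_compose[OF measurable_snd this]
  have "(\<lambda>z. emeasure (ctmc_paths P E x') {\<sigma>. (x, snd z) ## \<sigma> \<in> A})
      \<in> borel_measurable (ctmc_step P E y)" for x'
    by (simp add: measurable_cong_sets[OF sets_ctmc_step refl])
  moreover have "fst \<in> measurable (ctmc_step P E y) (count_space UNIV)"
    by (simp add: measurable_cong_sets[OF sets_ctmc_step refl])
  ultimately show ?thesis
    by (rule measurable_compose_countable[where f="\<lambda>x' z. emeasure (ctmc_paths P E x')
          {\<sigma>. (x, snd z) ## \<sigma> \<in> A}"])
qed

text \<open>The Markov property at the first jump. It holds because the noise stream is i.i.d.:
  the first sample determines the first successor and residence time, the independent tail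
  drives the rest of the path.\<close>

lemma emeasure_ctmc_paths_first_step:
  fixes x :: "'s::countable"
  assumes E: "\<And>x. E x > 0" and A: "A \<in> sets path_space"
  shows "emeasure (ctmc_paths P E x) A =
    (\<integral>\<^sup>+z. emeasure (ctmc_paths P E (fst z)) {\<sigma>. (x, snd z) ## \<sigma> \<in> A} \<partial>ctmc_step P E x)"
proof -
  let ?M = "PiM UNIV (ctmc_step P E)"
  interpret M: prob_space ?M by (intro prob_space_PiM prob_space_ctmc_step E)
  define G where "G z = emeasure (ctmc_paths P E (fst z)) {\<sigma>. (x, snd z) ## \<sigma> \<in> A}" for z
  have G: "G \<in> borel_measurable (ctmc_step P E x)"
    unfolding G_def by (rule measurable_emeasure_ctmc_paths_Cons[OF E A])
  have pre_A: "path_from x -` A \<in> sets (ctmc_noise P E)"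
    using measurable_sets[OF measurable_path_from A] by (simp add: space_ctmc_noise)
  have "emeasure (ctmc_paths P E x) A = emeasure (ctmc_noise P E) (path_from x -` A)"
    unfolding ctmc_paths_def
    by (subst emeasure_distr[OF measurable_path_from A]) (simp add: space_ctmc_noise)
  also have "\<dots> = (\<integral>\<^sup>+a. emeasure (ctmc_noise P E)
      {\<omega> \<in> space (ctmc_noise P E). a ## \<omega> \<in> path_from x -` A} \<partial>?M)"
    using M.emeasure_stream_space[of "path_from x -` A"] pre_A by (simp add: ctmc_noise_def)
  also have "\<dots> = (\<integral>\<^sup>+a. G (a x) \<partial>?M)"
  proof (rule nn_integral_cong)
    fix a :: "'s \<Rightarrow> 's \<times> real"
    have "{\<omega> \<in> space (ctmc_noise P E). a ## \<omega> \<in> path_from x -` A} =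
        path_from (fst (a x)) -` {\<sigma>. (x, snd (a x)) ## \<sigma> \<in> A} \<inter> space (ctmc_noise P E)"
      by (auto simp: space_ctmc_noise path_from.code[of x "a ## _"])
    then show "emeasure (ctmc_noise P E) {\<omega> \<in> space (ctmc_noise P E). a ## \<omega> \<in> path_from x -` A}
        = G (a x)"
      unfolding G_def ctmc_paths_def
      by (simp add: emeasure_distr[OF measurable_path_from Cons_preimage_sets[OF A]])
  qed
  also have "\<dots> = (\<integral>\<^sup>+z. G z \<partial>distr ?M (ctmc_step P E x) (\<lambda>a. a x))"
    by (rule nn_integral_distr[symmetric]) (auto intro: measurable_component_singleton simp: G)
  also have "distr ?M (ctmc_step P E x) (\<lambda>a. a x) = ctmc_step P E x"
    by (rule distr_PiM_component) (auto intro: prob_space_ctmc_step E)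
  finally show ?thesis by (simp add: G_def)
qed

section \<open>Almost sure properties of paths\<close>

lemma emeasure_exponential_density_nonpos:
  assumes "0 < l"
  shows "emeasure (density lborel (exponential_density l)) {..0} = 0"
proof -
  have "emeasure (density lborel (exponential_density l)) {..0} =
      (\<integral>\<^sup>+t. ennreal (exponential_density l t) * indicator {..0} t \<partial>lborel)"
    by (rule emeasure_density) auto
  also have "\<dots> = 0"
    using AE_lborel_singleton[of "0::real"]
    by (subst nn_integral_0_iff_AE)
      (auto elim!: eventually_mono simp: exponential_density_def indicator_def)
  finally show ?thesis .
qed

lemma emeasure_ctmc_step_nonpos_time:
  assumes "E x > 0"
  shows "emeasure (ctmc_step P E x) {z. snd z \<le> 0} = 0"
proof -
  interpret D: prob_space "density lborel (exponential_density (E x))"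
    by (rule prob_space_exponential_density[OF assms])
  have "emeasure (ctmc_step P E x) {z. snd z \<le> 0} = emeasure (ctmc_step P E x) (UNIV \<times> {..0})"
    by (rule arg_cong) auto
  also have "\<dots> =
      emeasure (measure_pmf (P x)) UNIV * emeasure (density lborel (exponential_density (E x))) {..0}"
    unfolding ctmc_step_def by (simp add: D.emeasure_pair_measure_Times)
  finally show ?thesis by (simp add: emeasure_exponential_density_nonpos[OF assms])
qed

lemma st_Cons_0 [simp]: "st (a ## \<sigma>) 0 = fst a"
  and st_Cons_Suc [simp]: "st (a ## \<sigma>) (Suc n) = st \<sigma> n"
  and tm_Cons_0 [simp]: "tm (a ## \<sigma>) 0 = snd a"
  and tm_Cons_Suc [simp]: "tm (a ## \<sigma>) (Suc n) = tm \<sigma> n"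
  by (simp_all add: st_def tm_def)

lemma sets_path_space_Collect: "Measurable.pred path_space P \<Longrightarrow> {\<sigma>. P \<sigma>} \<in> sets path_space"
  by (simp add: pred_def space_path_space)

lemma measurable_st [measurable]: "(\<lambda>\<sigma>. st \<sigma> n) \<in> measurable path_space (count_space UNIV)"
  unfolding st_def by measurable

lemma measurable_tm [measurable]: "(\<lambda>\<sigma>. tm \<sigma> n) \<in> borel_measurable path_space"
  unfolding tm_def by measurable

lemma emeasure_ctmc_paths_tm_nonpos:
  fixes x :: "'s::countable"
  assumes E: "\<And>x. E x > 0"
  shows "emeasure (ctmc_paths P E x) {\<sigma>. tm \<sigma> n \<le> 0} = 0"
proof (induction n arbitrary: x)
  case 0
  have "{\<sigma> :: ('s \<times> real) stream. tm \<sigma> 0 \<le> 0} \<in> sets path_space"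
    by (intro sets_path_space_Collect) measurable
  then have "emeasure (ctmc_paths P E x) {\<sigma>. tm \<sigma> 0 \<le> 0} =
      (\<integral>\<^sup>+z. emeasure (ctmc_paths P E (fst z)) {\<sigma>. tm ((x, snd z) ## \<sigma>) 0 \<le> 0} \<partial>ctmc_step P E x)"
    by (subst emeasure_ctmc_paths_first_step[where E=E, OF E]) simp_all
  also have "\<dots> = (\<integral>\<^sup>+z. indicator {z. snd z \<le> 0} z \<partial>ctmc_step P E x)"
    using prob_space.emeasure_space_1[OF prob_space_ctmc_paths[where E=E, OF E]]
    by (intro nn_integral_cong) (simp add: space_ctmc_paths split: split_indicator)
  also have "\<dots> = emeasure (ctmc_step P E x) {z. snd z \<le> 0}"
  proof (rule nn_integral_indicator)
    have "Measurable.pred (count_space UNIV \<Otimes>\<^sub>M borel) (\<lambda>z :: 's \<times> real. snd z \<le> 0)"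
      by measurable
    then show "{z. snd z \<le> 0} \<in> sets (ctmc_step P E x)"
      by (simp add: pred_def space_pair_measure sets_ctmc_step)
  qed
  finally show ?case by (simp add: emeasure_ctmc_step_nonpos_time[where E=E, OF E])
next
  case (Suc n)
  have "{\<sigma> :: ('s \<times> real) stream. tm \<sigma> (Suc n) \<le> 0} \<in> sets path_space"
    by (intro sets_path_space_Collect) measurable
  with Suc show ?case
    by (subst emeasure_ctmc_paths_first_step[where E=E, OF E]) simp_all
qed

lemma AE_ctmc_paths_tm_pos:
  fixes x :: "'s::countable"
  assumes E: "\<And>x. E x > 0"
  shows "AE \<sigma> in ctmc_paths P E x. \<forall>n. tm \<sigma> n > 0"
proof -
  have "AE \<sigma> in ctmc_paths P E x. tm \<sigma> n > 0" for n
    by (rule AE_I[where N="{\<sigma>. tm \<sigma> n \<le> 0}"])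
      (auto simp: sets_ctmc_paths emeasure_ctmc_paths_tm_nonpos[OF E]
        intro: sets_path_space_Collect)
  then show ?thesis by (simp add: AE_all_countable)
qed

lemma AE_ctmc_paths_st_0:
  fixes x :: "'s::countable"
  assumes E: "\<And>x. E x > 0"
  shows "AE \<sigma> in ctmc_paths P E x. st \<sigma> 0 = x"
proof (rule AE_I[where N="{\<sigma>. st \<sigma> 0 \<noteq> x}"])
  have "{\<sigma>. st \<sigma> 0 \<noteq> x} \<in> sets path_space"
    by (intro sets_path_space_Collect) measurable
  then show "emeasure (ctmc_paths P E x) {\<sigma>. st \<sigma> 0 \<noteq> x} = 0"
    by (simp add: emeasure_ctmc_paths_first_step[where E=E, OF E])
qed (auto simp: sets_ctmc_paths intro: sets_path_space_Collect)

section \<open>Time indices, rewards and measurability of reachability\<close>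

abbreviation entry_time :: "('s \<times> real) stream \<Rightarrow> nat \<Rightarrow> real" where
  "entry_time \<sigma> m \<equiv> \<Sum>j<m. tm \<sigma> j"

abbreviation exit_time :: "('s \<times> real) stream \<Rightarrow> nat \<Rightarrow> real" where
  "exit_time \<sigma> m \<equiv> \<Sum>j\<le>m. tm \<sigma> j"

definition acc_reward :: "('s \<Rightarrow> real) \<Rightarrow> ('s \<times> real) stream \<Rightarrow> nat \<Rightarrow> real" where
  "acc_reward \<rho> \<sigma> m = (\<Sum>j<m. tm \<sigma> j * \<rho> (st \<sigma> j))"

definition goal_deadline :: "('s \<Rightarrow> real) \<Rightarrow> 's \<Rightarrow> real \<Rightarrow> ('s \<times> real) stream \<Rightarrow> nat \<Rightarrow> real" where
  "goal_deadline \<rho> g r \<sigma> m = entry_time \<sigma> m + (r - acc_reward \<rho> \<sigma> m) / \<rho> g"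

lemma exit_time_le_entry_time:
  assumes "\<forall>n. tm \<sigma> n > 0" and "k < m"
  shows "exit_time \<sigma> k \<le> entry_time \<sigma> m"
  by (rule sum_mono2) (use assms in \<open>auto intro: less_imp_le\<close>)

lemma exit_time_eq_entry_time_Suc: "exit_time \<sigma> m = entry_time \<sigma> (Suc m)"
  by (simp add: lessThan_Suc_atMost)

lemma idx_at_eqI:
  assumes "t \<le> exit_time \<sigma> m" and "\<And>k. k < m \<Longrightarrow> exit_time \<sigma> k < t"
  shows "idx_at \<sigma> t = m"
  unfolding idx_at_def
  by (rule Least_equality) (use assms in \<open>auto simp flip: not_less\<close>)

lemma idx_at_bounds:
  assumes "t \<le> exit_time \<sigma> n"
  shows "t \<le> exit_time \<sigma> (idx_at \<sigma> t)" and "\<And>k. k < idx_at \<sigma> t \<Longrightarrow> exit_time \<sigma> k < t"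
  using LeastI[of "\<lambda>k. t \<le> exit_time \<sigma> k", OF assms]
    not_less_Least[of _ "\<lambda>k. t \<le> exit_time \<sigma> k"]
  by (auto simp: idx_at_def not_le)

lemma cum_reward_state_at:
  "cum_reward \<rho> \<sigma> t =
    acc_reward \<rho> \<sigma> (idx_at \<sigma> t) + (t - entry_time \<sigma> (idx_at \<sigma> t)) * \<rho> (state_at \<sigma> t)"
  by (simp add: cum_reward_def acc_reward_def state_at_def Let_def)

lemma cum_reward_le_iff_goal_deadline:
  assumes "state_at \<sigma> t = g" and "\<rho> g > 0"
  shows "cum_reward \<rho> \<sigma> t \<le> r \<longleftrightarrow> t \<le> goal_deadline \<rho> g r \<sigma> (idx_at \<sigma> t)"
  using assms by (simp add: cum_reward_state_at goal_deadline_def field_simps)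

text \<open>If no partial sum of residence times reaches t, idx_at is the junk value LEAST of an
  empty predicate, the same for t and t'; the witness is then t' itself.\<close>

lemma idx_at_witness:
  assumes "t \<le> t'"
  obtains u where "u = min (exit_time \<sigma> (idx_at \<sigma> t)) t' \<or> u = t'"
    and "t \<le> u" and "u \<le> t'" and "idx_at \<sigma> u = idx_at \<sigma> t"
proof (cases "\<exists>k. t \<le> exit_time \<sigma> k")
  case True
  then obtain k where "t \<le> exit_time \<sigma> k" ..
  note bounds = idx_at_bounds[OF this]
  let ?u = "min (exit_time \<sigma> (idx_at \<sigma> t)) t'"
  have "idx_at \<sigma> ?u = idx_at \<sigma> t"
    by (rule idx_at_eqI) (use bounds assms in \<open>auto intro: less_le_trans\<close>)
  show ?thesis
    by (rule that[of ?u]) (use bounds assms \<open>idx_at \<sigma> ?u = idx_at \<sigma> t\<close> in auto)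
next
  case False
  then have "(\<lambda>k. t' \<le> exit_time \<sigma> k) = (\<lambda>k. t \<le> exit_time \<sigma> k)"
    using assms by (auto simp: fun_eq_iff dest: order_trans)
  then have "idx_at \<sigma> t' = idx_at \<sigma> t" by (simp add: idx_at_def)
  with that assms show ?thesis by auto
qed

text \<open>Only two candidate times per index need to be checked, which makes reach_bounded
  measurable although it quantifies over all real times.\<close>

lemma reach_bounded_eq_witnesses:
  assumes "\<rho> g > 0"
  shows "reach_bounded \<rho> g r = {\<sigma>. \<exists>m. \<exists>u \<in> {min (exit_time \<sigma> m) (goal_deadline \<rho> g r \<sigma> m),
    goal_deadline \<rho> g r \<sigma> m}. 0 \<le> u \<and> state_at \<sigma> u = g \<and> cum_reward \<rho> \<sigma> u \<le> r}"
    (is "_ = ?W")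
proof
  show "?W \<subseteq> reach_bounded \<rho> g r" unfolding reach_bounded_def by blast
next
  show "reach_bounded \<rho> g r \<subseteq> ?W"
  proof
    fix \<sigma> assume "\<sigma> \<in> reach_bounded \<rho> g r"
    then obtain t where "0 \<le> t" "state_at \<sigma> t = g" "cum_reward \<rho> \<sigma> t \<le> r"
      by (auto simp: reach_bounded_def)
    moreover note deadline = cum_reward_le_iff_goal_deadline[where \<rho>=\<rho> and g=g, OF _ assms]
    ultimately have "t \<le> goal_deadline \<rho> g r \<sigma> (idx_at \<sigma> t)" by blast
    then obtain u where u: "u = min (exit_time \<sigma> (idx_at \<sigma> t)) (goal_deadline \<rho> g r \<sigma> (idx_at \<sigma> t))
        \<or> u = goal_deadline \<rho> g r \<sigma> (idx_at \<sigma> t)"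
      and "t \<le> u" "u \<le> goal_deadline \<rho> g r \<sigma> (idx_at \<sigma> t)" "idx_at \<sigma> u = idx_at \<sigma> t"
      by (rule idx_at_witness)
    moreover from this \<open>state_at \<sigma> t = g\<close> have "state_at \<sigma> u = g"
      by (simp add: state_at_def)
    ultimately have "0 \<le> u" "state_at \<sigma> u = g" "cum_reward \<rho> \<sigma> u \<le> r"
      using \<open>0 \<le> t\<close> deadline[of \<sigma> u] by auto
    with u show "\<sigma> \<in> ?W" by blast
  qed
qed

lemma measurable_idx_at [measurable]:
  assumes [measurable]: "f \<in> borel_measurable path_space"
  shows "(\<lambda>\<sigma>. idx_at \<sigma> (f \<sigma>)) \<in> measurable path_space (count_space UNIV)"
  unfolding idx_at_def by measurable

lemma measurable_state_at [measurable]: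
  assumes [measurable]: "f \<in> borel_measurable path_space"
  shows "(\<lambda>\<sigma>. state_at \<sigma> (f \<sigma>)) \<in> measurable path_space (count_space UNIV)"
  unfolding state_at_def
  by (rule measurable_compose_countable[where f="\<lambda>n \<sigma>. st \<sigma> n"]) measurable

lemma measurable_comp_st [measurable]: "(\<lambda>\<sigma>. f (st \<sigma> n)) \<in> borel_measurable path_space"
  by (rule measurable_compose[OF measurable_st]) simp

lemma measurable_acc_reward [measurable]: "(\<lambda>\<sigma>. acc_reward \<rho> \<sigma> m) \<in> borel_measurable path_space"
  unfolding acc_reward_def by measurable

lemma measurable_cum_reward [measurable]:
  assumes [measurable]: "f \<in> borel_measurable path_space"
  shows "(\<lambda>\<sigma>. cum_reward \<rho> \<sigma> (f \<sigma>)) \<in> borel_measurable path_space"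
  unfolding cum_reward_def Let_def
  by (rule measurable_compose_countable[where f="\<lambda>m \<sigma>. (\<Sum>j<m. tm \<sigma> j * \<rho> (st \<sigma> j)) +
      (f \<sigma> - entry_time \<sigma> m) * \<rho> (st \<sigma> m)"]) measurable

lemma sets_reach_bounded:
  assumes "\<rho> g > 0"
  shows "reach_bounded \<rho> g r \<in> sets path_space"
  unfolding reach_bounded_eq_witnesses[where \<rho>=\<rho>, OF assms] goal_deadline_def
  by (intro sets_path_space_Collect) (simp, measurable)

section \<open>Reachability as an event of the jump chain\<close>

definition enter_below_within :: "('s \<Rightarrow> real) \<Rightarrow> 's \<Rightarrow> real \<Rightarrow> nat \<Rightarrow> ('s \<times> real) stream set"
  where "enter_below_within \<rho> g r N = {\<sigma>. \<exists>n<N. st \<sigma> n = g \<and> acc_reward \<rho> \<sigma> n < r}"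

definition enter_below :: "('s \<Rightarrow> real) \<Rightarrow> 's \<Rightarrow> real \<Rightarrow> ('s \<times> real) stream set"
  where "enter_below \<rho> g r = {\<sigma>. \<exists>n. st \<sigma> n = g \<and> acc_reward \<rho> \<sigma> n < r}"

lemma acc_reward_0 [simp]: "acc_reward \<rho> \<sigma> 0 = 0"
  by (simp add: acc_reward_def)

lemma acc_reward_Cons_Suc [simp]:
  "acc_reward \<rho> (a ## \<sigma>) (Suc n) = snd a * \<rho> (fst a) + acc_reward \<rho> \<sigma> n"
  unfolding acc_reward_def sum.lessThan_Suc_shift by simp

lemma Cons_in_enter_below_within_Suc:
  "a ## \<sigma> \<in> enter_below_within \<rho> g r (Suc N) \<longleftrightarrow>
    (fst a = g \<and> 0 < r) \<or> \<sigma> \<in> enter_below_within \<rho> g (r - snd a * \<rho> (fst a)) N"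
  unfolding enter_below_within_def mem_Collect_eq Ex_less_Suc2
  by (simp add: algebra_simps)

lemma Cons_in_enter_below:
  "a ## \<sigma> \<in> enter_below \<rho> g r \<longleftrightarrow>
    (fst a = g \<and> 0 < r) \<or> \<sigma> \<in> enter_below \<rho> g (r - snd a * \<rho> (fst a))"
proof -
  have split_0_Suc: "(\<exists>n. Q n) \<longleftrightarrow> Q 0 \<or> (\<exists>n. Q (Suc n))" for Q :: "nat \<Rightarrow> bool"
    by (metis not0_implies_Suc)
  show ?thesis
    unfolding enter_below_def mem_Collect_eq
      split_0_Suc[of "\<lambda>n. st (a ## \<sigma>) n = g \<and> acc_reward \<rho> (a ## \<sigma>) n < r"]
    by (simp add: algebra_simps)
qed

lemma enter_below_eq_UN: "enter_below \<rho> g r = (\<Union>N. enter_below_within \<rho> g r N)"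
  by (auto simp: enter_below_def enter_below_within_def)

lemma incseq_enter_below_within: "incseq (enter_below_within \<rho> g r)"
  unfolding incseq_def enter_below_within_def by (auto dest: order_less_le_trans)

lemma sets_enter_below_within [measurable]: "enter_below_within \<rho> g r N \<in> sets path_space"
  unfolding enter_below_within_def by (intro sets_path_space_Collect) measurable

lemma sets_enter_below [measurable]: "enter_below \<rho> g r \<in> sets path_space"
  unfolding enter_below_eq_UN by measurable

lemma enter_below_if_reach_bounded:
  assumes pos: "\<forall>n. tm \<sigma> n > 0" and st_0: "st \<sigma> 0 \<noteq> g" and "\<rho> g > 0"
    and "\<sigma> \<in> reach_bounded \<rho> g r"
  shows "\<sigma> \<in> enter_below \<rho> g r"
proof -
  obtain t where "state_at \<sigma> t = g" and reward: "cum_reward \<rho> \<sigma> t \<le> r"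
    using assms(4) by (auto simp: reach_bounded_def)
  define m where "m = idx_at \<sigma> t"
  have st_m: "st \<sigma> m = g"
    using \<open>state_at \<sigma> t = g\<close> by (simp add: state_at_def m_def)
  have "entry_time \<sigma> m < t"
  proof (cases "\<exists>k. t \<le> exit_time \<sigma> k")
    case True
    then obtain k where k: "t \<le> exit_time \<sigma> k" ..
    obtain m' where "m = Suc m'"
      using st_m st_0 by (cases m) auto
    with idx_at_bounds(2)[OF k, of m'] have "exit_time \<sigma> m' < t" by (simp add: m_def)
    with \<open>m = Suc m'\<close> show ?thesis by (simp add: exit_time_eq_entry_time_Suc)
  next
    case False
    then have "exit_time \<sigma> m < t" by (simp add: not_le)
    moreover have "tm \<sigma> m > 0" using pos ..
    ultimately show ?thesis by (simp add: exit_time_eq_entry_time_Suc)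
  qed
  with \<open>\<rho> g > 0\<close> have "0 < (t - entry_time \<sigma> m) * \<rho> g" by simp
  with reward have "acc_reward \<rho> \<sigma> m < r"
    using \<open>state_at \<sigma> t = g\<close> by (simp add: cum_reward_state_at m_def)
  with st_m show ?thesis by (auto simp: enter_below_def)
qed

lemma reach_bounded_if_enter_below:
  assumes pos: "\<forall>n. tm \<sigma> n > 0" and "\<rho> g > 0" and "\<sigma> \<in> enter_below \<rho> g r"
  shows "\<sigma> \<in> reach_bounded \<rho> g r"
proof -
  obtain n where st_n: "st \<sigma> n = g" and acc: "acc_reward \<rho> \<sigma> n < r"
    using assms(3) by (auto simp: enter_below_def)
  define \<delta> where "\<delta> = min (tm \<sigma> n) ((r - acc_reward \<rho> \<sigma> n) / \<rho> g)"
  define t where "t = entry_time \<sigma> n + \<delta>"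
  have "\<delta> > 0" using pos acc \<open>\<rho> g > 0\<close> by (simp add: \<delta>_def)
  have idx: "idx_at \<sigma> t = n"
  proof (rule idx_at_eqI)
    show "t \<le> exit_time \<sigma> n"
      by (simp add: t_def \<delta>_def exit_time_eq_entry_time_Suc)
    show "exit_time \<sigma> k < t" if "k < n" for k
      using exit_time_le_entry_time[OF pos that] \<open>\<delta> > 0\<close> by (simp add: t_def)
  qed
  have "cum_reward \<rho> \<sigma> t = acc_reward \<rho> \<sigma> n + \<delta> * \<rho> g"
    unfolding cum_reward_state_at state_at_def idx by (simp add: st_n t_def)
  also have "\<dots> \<le> acc_reward \<rho> \<sigma> n + (r - acc_reward \<rho> \<sigma> n) / \<rho> g * \<rho> g"
    using \<open>\<rho> g > 0\<close> by (intro add_left_mono mult_right_mono) (auto simp: \<delta>_def)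
  also have "\<dots> = r" using \<open>\<rho> g > 0\<close> by simp
  finally have "cum_reward \<rho> \<sigma> t \<le> r" .
  moreover have "entry_time \<sigma> n \<ge> 0"
    using pos by (simp add: sum_nonneg less_imp_le)
  then have "t \<ge> 0" using \<open>\<delta> > 0\<close> by (simp add: t_def)
  ultimately show ?thesis
    using idx st_n by (auto simp: reach_bounded_def state_at_def)
qed

section \<open>Least fixed point characterisation\<close>

definition reach_op ::
    "('s \<Rightarrow> 's pmf) \<Rightarrow> ('s \<Rightarrow> real) \<Rightarrow> ('s \<Rightarrow> real) \<Rightarrow> 's \<Rightarrow> ('s \<Rightarrow> real \<Rightarrow> ennreal) \<Rightarrow>
      's \<Rightarrow> real \<Rightarrow> ennreal"
  where "reach_op P E \<rho> g f x r =
    (if x = g \<and> 0 < r then 1 else \<integral>\<^sup>+z. f (fst z) (r - snd z * \<rho> x) \<partial>ctmc_step P E x)"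

lemma reach_op_mono:
  "(\<And>y r. f y r \<le> f' y r) \<Longrightarrow> reach_op P E \<rho> g f x r \<le> reach_op P E \<rho> g f' x r"
  unfolding reach_op_def by (auto intro!: nn_integral_mono)

lemma emeasure_ctmc_paths_eq_reach_op:
  fixes x :: "'s::countable"
  assumes E: "\<And>x. E x > 0" and A: "A \<in> sets path_space"
    and Cons_in_A: "\<And>t \<sigma>. (x, t) ## \<sigma> \<in> A \<longleftrightarrow> (x = g \<and> 0 < r) \<or> \<sigma> \<in> B (r - t * \<rho> x)"
  shows "emeasure (ctmc_paths P E x) A =
    reach_op P E \<rho> g (\<lambda>y r. emeasure (ctmc_paths P E y) (B r)) x r"
proof (cases "x = g \<and> 0 < r")
  case True
  then have "{\<sigma>. (x, t) ## \<sigma> \<in> A} = UNIV" for t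
    using Cons_in_A by blast
  then have "emeasure (ctmc_paths P E x) A = (\<integral>\<^sup>+z. 1 \<partial>ctmc_step P E x)"
    using prob_space.emeasure_space_1[OF prob_space_ctmc_paths[where E=E, OF E]]
    by (simp add: emeasure_ctmc_paths_first_step[where E=E, OF E A] space_ctmc_paths)
  also have "\<dots> = 1"
    using prob_space.emeasure_space_1[OF prob_space_ctmc_step[where E=E, OF E]] by simp
  finally show ?thesis using True by (simp add: reach_op_def)
next
  case False
  then have "{\<sigma>. (x, t) ## \<sigma> \<in> A} = B (r - t * \<rho> x)" for t
    using Cons_in_A by blast
  then show ?thesis
    unfolding reach_op_def if_not_P[OF False]
    by (simp add: emeasure_ctmc_paths_first_step[where E=E, OF E A])
qed

definition enter_emeasure ::
    "('s \<Rightarrow> 's pmf) \<Rightarrow> ('s \<Rightarrow> real) \<Rightarrow> ('s \<Rightarrow> real) \<Rightarrow> 's \<Rightarrow> 's \<Rightarrow> real \<Rightarrow> ennreal"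
  where "enter_emeasure P E \<rho> g x r = emeasure (ctmc_paths P E x) (enter_below \<rho> g r)"

lemma reach_prob_eq_enter_emeasure:
  fixes s :: "'s::countable"
  assumes E: "\<And>x. E x > 0" and "\<rho> g > 0" and "s \<noteq> g"
  shows "reach_prob P E \<rho> s g r = enn2real (enter_emeasure P E \<rho> g s r)"
proof -
  have "AE \<sigma> in ctmc_paths P E s. \<sigma> \<in> reach_bounded \<rho> g r \<longleftrightarrow> \<sigma> \<in> enter_below \<rho> g r"
    using AE_ctmc_paths_tm_pos[where E=E, OF E] AE_ctmc_paths_st_0[where E=E, OF E]
  proof eventually_elim
    case (elim \<sigma>)
    with assms show ?case
      using enter_below_if_reach_bounded[of \<sigma> g \<rho> r] reach_bounded_if_enter_below[of \<sigma> \<rho> g r]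
      by blast
  qed
  then have "emeasure (ctmc_paths P E s) (reach_bounded \<rho> g r) =
      emeasure (ctmc_paths P E s) (enter_below \<rho> g r)"
    by (rule emeasure_eq_AE) (auto simp: sets_ctmc_paths sets_reach_bounded[where \<rho>=\<rho>, OF \<open>\<rho> g > 0\<close>])
  then show ?thesis by (simp add: reach_prob_def measure_def enter_emeasure_def)
qed

lemma enter_emeasure_reach_op:
  fixes x :: "'s::countable"
  assumes E: "\<And>x. E x > 0"
  shows "enter_emeasure P E \<rho> g x r = reach_op P E \<rho> g (enter_emeasure P E \<rho> g) x r"
  unfolding enter_emeasure_def
  by (rule emeasure_ctmc_paths_eq_reach_op[OF E]) (auto simp: Cons_in_enter_below)

lemma enter_emeasure_least:
  fixes x :: "'s::countable"
  assumes E: "\<And>x. E x > 0" and pre_fixpoint: "\<And>y r. reach_op P E \<rho> g f y r \<le> f y r"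
  shows "enter_emeasure P E \<rho> g x r \<le> f x r"
proof -
  have "emeasure (ctmc_paths P E y) (enter_below_within \<rho> g r N) \<le> f y r" for N y r
  proof (induction N arbitrary: y r)
    case 0
    then show ?case by (simp add: enter_below_within_def)
  next
    case (Suc N)
    have "emeasure (ctmc_paths P E y) (enter_below_within \<rho> g r (Suc N)) =
        reach_op P E \<rho> g (\<lambda>y r. emeasure (ctmc_paths P E y) (enter_below_within \<rho> g r N)) y r"
      by (rule emeasure_ctmc_paths_eq_reach_op[OF E])
        (auto simp: Cons_in_enter_below_within_Suc)
    also have "\<dots> \<le> reach_op P E \<rho> g f y r"
      by (rule reach_op_mono) (rule Suc)
    also have "\<dots> \<le> f y r"
      by (rule pre_fixpoint)
    finally show ?case .
  qed
  then show ?thesis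
    unfolding enter_emeasure_def enter_below_eq_UN
    by (subst SUP_emeasure_incseq[symmetric])
      (auto simp: sets_ctmc_paths intro: incseq_enter_below_within SUP_least)
qed

section \<open>Removing the self-loop\<close>

lemma nn_integral_ctmc_step_fst:
  assumes "E x > 0"
  shows "(\<integral>\<^sup>+z. F (fst z) \<partial>ctmc_step P E x) = (\<integral>\<^sup>+y. F y \<partial>measure_pmf (P x))"
proof -
  interpret D: prob_space "density lborel (exponential_density (E x))"
    by (rule prob_space_exponential_density[OF assms])
  have "(\<integral>\<^sup>+z. F (fst z) \<partial>ctmc_step P E x) =
      (\<integral>\<^sup>+y. F y \<partial>distr (ctmc_step P E x) (measure_pmf (P x)) fst)"
    unfolding ctmc_step_def by (subst nn_integral_distr) auto
  also have "distr (ctmc_step P E x) (measure_pmf (P x)) fst = measure_pmf (P x)"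
    unfolding ctmc_step_def by (rule D.distr_pair_fst)
  finally show ?thesis .
qed

lemma reach_op_zero_reward:
  fixes P :: "'s::finite \<Rightarrow> 's pmf"
  assumes "E x > 0" and "x \<noteq> g" and "\<rho> x = 0"
  shows "reach_op P E \<rho> g f x r = (\<Sum>y\<in>UNIV. ennreal (pmf (P x) y) * f y r)"
  using assms
  by (simp add: reach_op_def nn_integral_ctmc_step_fst[where F="\<lambda>y. f y r"]
      nn_integral_measure_pmf nn_integral_count_space_finite)

lemma fixpoint_iff_remove_self_loop:
  fixes p q c :: "'s::finite \<Rightarrow> real"
  assumes "p s \<noteq> 1" and "q s = 0" and q: "\<And>y. y \<noteq> s \<Longrightarrow> q y = p y / (1 - p s)"
  shows "c s = (\<Sum>y\<in>UNIV. p y * c y) \<longleftrightarrow> c s = (\<Sum>y\<in>UNIV. q y * c y)"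
proof -
  define R where "R = (\<Sum>y\<in>UNIV - {s}. p y * c y)"
  have "(\<Sum>y\<in>UNIV. p y * c y) = p s * c s + R"
    unfolding R_def by (subst sum.remove[of UNIV s]) auto
  moreover have "(\<Sum>y\<in>UNIV. q y * c y) = R / (1 - p s)"
    using \<open>q s = 0\<close> q
    by (subst sum.remove[of UNIV s]) (auto simp: R_def sum_divide_distrib intro!: sum.cong)
  moreover have "c s = p s * c s + R \<longleftrightarrow> c s = R / (1 - p s)"
    using \<open>p s \<noteq> 1\<close> by (auto simp: field_simps)
  ultimately show ?thesis by simp
qed

lemma fixpoint_iff_remove_self_loop_ennreal:
  fixes p q :: "'s::finite \<Rightarrow> real" and h :: "'s \<Rightarrow> ennreal"
  assumes "p s \<noteq> 1" and "q s = 0" and "\<And>y. y \<noteq> s \<Longrightarrow> q y = p y / (1 - p s)"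
    and p_nonneg: "\<And>y. p y \<ge> 0" and q_nonneg: "\<And>y. q y \<ge> 0" and h_finite: "\<And>y. h y \<noteq> \<top>"
  shows "h s = (\<Sum>y\<in>UNIV. ennreal (p y) * h y) \<longleftrightarrow> h s = (\<Sum>y\<in>UNIV. ennreal (q y) * h y)"
proof -
  define c where "c y = enn2real (h y)" for y
  have c_nonneg: "c y \<ge> 0" for y
    by (simp add: c_def)
  have h_eq: "h = (\<lambda>y. ennreal (c y))"
    using h_finite by (simp add: c_def fun_eq_iff ennreal_enn2real_if)
  have "h s = (\<Sum>y\<in>UNIV. ennreal (w y) * h y) \<longleftrightarrow> c s = (\<Sum>y\<in>UNIV. w y * c y)"
    if "\<And>y. w y \<ge> 0" for w
    using that c_nonneg
    by (simp add: h_eq ennreal_mult'[symmetric] sum_nonneg)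
  with fixpoint_iff_remove_self_loop[of p s q c] assms show ?thesis by simp
qed

lemma enter_emeasure_le_if_fixpoint_transfers:
  fixes P Q :: "'s::finite \<Rightarrow> 's pmf"
  assumes E: "\<And>x. E x > 0" and "s \<noteq> g" and "\<rho> s = 0"
    and Q_eq: "\<And>x. x \<noteq> s \<Longrightarrow> Q x = P x"
    and transfer: "\<And>h. (\<And>y. h y \<noteq> \<top>) \<Longrightarrow> h s = (\<Sum>y\<in>UNIV. ennreal (pmf (P s) y) * h y) \<Longrightarrow>
      h s = (\<Sum>y\<in>UNIV. ennreal (pmf (Q s) y) * h y)"
  shows "enter_emeasure Q E \<rho> g x r \<le> enter_emeasure P E \<rho> g x r"
proof (rule enter_emeasure_least[OF E])
  let ?h = "enter_emeasure P E \<rho> g"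
  fix y r
  show "reach_op Q E \<rho> g ?h y r \<le> ?h y r"
  proof (cases "y = s")
    case False
    then have "reach_op Q E \<rho> g ?h y r = reach_op P E \<rho> g ?h y r"
      by (simp add: reach_op_def ctmc_step_def Q_eq)
    then show ?thesis by (simp flip: enter_emeasure_reach_op[where E=E, OF E])
  next
    case True
    have "?h y r \<noteq> \<top>" for y r
      unfolding enter_emeasure_def
      by (rule neq_top_trans[OF ennreal_one_neq_top
            prob_space.emeasure_le_1[OF prob_space_ctmc_paths[where E=E, OF E]]])
    moreover note zero_reward =
      reach_op_zero_reward[where E=E and x=s and \<rho>=\<rho> and g=g, OF E \<open>s \<noteq> g\<close> \<open>\<rho> s = 0\<close>]
    then have "?h s r = (\<Sum>y\<in>UNIV. ennreal (pmf (P s) y) * ?h y r)"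
      using enter_emeasure_reach_op[where E=E, OF E] by metis
    ultimately have "?h s r = (\<Sum>y\<in>UNIV. ennreal (pmf (Q s) y) * ?h y r)"
      by (intro transfer)
    with True zero_reward show ?thesis by simp
  qed
qed

lemma enter_emeasure_eq_if_fixpoint_equations_equiv:
  fixes P Q :: "'s::finite \<Rightarrow> 's pmf"
  assumes E: "\<And>x. E x > 0" and "s \<noteq> g" and "\<rho> s = 0"
    and Q_eq: "\<And>x. x \<noteq> s \<Longrightarrow> Q x = P x"
    and equiv: "\<And>h. (\<And>y. h y \<noteq> \<top>) \<Longrightarrow> h s = (\<Sum>y\<in>UNIV. ennreal (pmf (P s) y) * h y) \<longleftrightarrow>
      h s = (\<Sum>y\<in>UNIV. ennreal (pmf (Q s) y) * h y)"
  shows "enter_emeasure Q E \<rho> g x r = enter_emeasure P E \<rho> g x r"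
proof -
  note le = enter_emeasure_le_if_fixpoint_transfers[where E=E and \<rho>=\<rho> and s=s and g=g,
      OF E \<open>s \<noteq> g\<close> \<open>\<rho> s = 0\<close>]
  have "enter_emeasure Q E \<rho> g x r \<le> enter_emeasure P E \<rho> g x r"
  proof (rule le)
    show "h s = (\<Sum>y\<in>UNIV. ennreal (pmf (Q s) y) * h y)"
      if "\<And>y. h y \<noteq> \<top>" and "h s = (\<Sum>y\<in>UNIV. ennreal (pmf (P s) y) * h y)" for h
      using equiv[OF that(1)] that(2) by (rule iffD1)
  qed (rule Q_eq)
  moreover have "enter_emeasure P E \<rho> g x r \<le> enter_emeasure Q E \<rho> g x r"
  proof (rule le)
    show "h s = (\<Sum>y\<in>UNIV. ennreal (pmf (P s) y) * h y)"
      if "\<And>y. h y \<noteq> \<top>" and "h s = (\<Sum>y\<in>UNIV. ennreal (pmf (Q s) y) * h y)" for h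
      using equiv[OF that(1)] that(2) by (rule iffD2)
  qed (rule Q_eq[symmetric])
  ultimately show ?thesis by (rule antisym)
qed

theorem lemma5:
  fixes P P' :: "'s::finite \<Rightarrow> 's pmf" and E :: "'s \<Rightarrow> real" and \<rho> :: "'s \<Rightarrow> real"
    and g s :: 's and r :: real
  assumes E_pos: "\<And>x. E x > 0"
    and rho_nonneg: "\<And>x. \<rho> x \<ge> 0"
    and g_absorbing: "absorbing P g"
    and g_unique: "\<And>x. absorbing P x \<Longrightarrow> x = g"
    and rho_g: "\<rho> g > 0"
    and rho_s: "\<rho> s = 0"
    and self_loop: "0 < pmf (P s) s" "pmf (P s) s < 1"
    and P'_other: "\<And>x. x \<noteq> s \<Longrightarrow> P' x = P x"
    and P'_s_s: "pmf (P' s) s = 0"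
    and P'_s: "\<And>s'. s' \<noteq> s \<Longrightarrow> pmf (P' s) s' = pmf (P s) s' / (1 - pmf (P s) s)"
    and r_nonneg: "r \<ge> 0"
  shows "reach_prob P E \<rho> s g r = reach_prob P' E \<rho> s g r"
proof -
  have "s \<noteq> g" using rho_s rho_g by auto
  have transfer: "h s = (\<Sum>y\<in>UNIV. ennreal (pmf (P s) y) * h y) \<longleftrightarrow>
      h s = (\<Sum>y\<in>UNIV. ennreal (pmf (P' s) y) * h y)" if "\<And>y. h y \<noteq> \<top>" for h :: "'s \<Rightarrow> ennreal"
    using self_loop(2) P'_s_s P'_s that
    by (intro fixpoint_iff_remove_self_loop_ennreal) auto
  have "enter_emeasure P' E \<rho> g s r = enter_emeasure P E \<rho> g s r"
    using E_pos \<open>s \<noteq> g\<close> rho_s P'_other transfer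
    by (rule enter_emeasure_eq_if_fixpoint_equations_equiv)
  then show ?thesis
    using reach_prob_eq_enter_emeasure[where E=E and \<rho>=\<rho> and g=g, OF E_pos rho_g \<open>s \<noteq> g\<close>] by metis
qed

end
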